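(* Let $N$ be a finite set with $|N|\ge 3$. Then for every $a\in N$ the inequality $\sum_{B:\,\emptyset\neq B\subseteq N\setminus\{a\}}\eta(a|B)\le 1$ defines a facet of $P_N$.
   Context: $\mathrm{DAG}(N)$ is the set of acyclic directed graphs over $N$; $\mathrm{pa}_G(a)$ is the parent set of $a$ in $G$. $\Upsilon=\{(a|B): a\in N,\ \emptyset\neq B\subseteq N\setminus\{a\}\}$; $\eta_G\in\mathbb{R}^{\Upsilon}$ has $\eta_G(a|B)=1$ if $B=\mathrm{pa}_G(a)$, else $0$; $P_N=\mathrm{conv}\{\eta_G:G\in\mathrm{DAG}(N)\}$ is the family-variable polytope. *)

theory Defs
  imports "HOL-Analysis.Analysis"
begin

text \<open>Directed graphs over a vertex set N are edge relations G with G \<subseteq> N \<times> N;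
  (b,a) \<in> G means an arrow b \<rightarrow> a.\<close>

definition DAG :: "'a set \<Rightarrow> ('a \<times> 'a) set set" where
  "DAG N = {G. G \<subseteq> N \<times> N \<and> acyclic G}"

definition pa :: "('a \<times> 'a) set \<Rightarrow> 'a \<Rightarrow> 'a set" where
  "pa G a = {b. (b, a) \<in> G}"

definition Upsilon :: "'a set \<Rightarrow> ('a \<times> 'a set) set" where
  "Upsilon N = {(a, B). a \<in> N \<and> B \<noteq> {} \<and> B \<subseteq> N - {a}}"

text \<open>R^Upsilon is embedded in real ^ ('a \<times> 'a set); coordinates outside Upsilon
  are identically 0 on all points considered, so faces/dimensions are unaffected.\<close>
definition eta :: "'a::finite set \<Rightarrow> ('a \<times> 'a) set \<Rightarrow> real ^ ('a \<times> 'a set)" where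
  "eta N G = (\<chi> i. if i \<in> Upsilon N \<and> snd i = pa G (fst i) then 1 else 0)"

definition family_polytope :: "'a::finite set \<Rightarrow> (real ^ ('a \<times> 'a set)) set" where
  "family_polytope N = convex hull (eta N ` DAG N)"

end

theory Submission
  imports Defs
begin

text \<open>The inequality is valid because every DAG gives node a at most one parent set. For the
  facet property it suffices that the face spans the whole coordinate space of the polytope,
  since the polytope contains 0 (the empty graph) while the face does not. The face contains
  the unit vector of every (a|B), realised by the star graph B \<rightarrow> a, and, for c \<noteq> a, the sum
  of the unit vectors of (c|C) and (a|{d}), realised by C \<rightarrow> c together with a single arrow
  d \<rightarrow> a, where d \<notin> {a, c} exists because |N| \<ge> 3. Subtracting gives every unit vector.\<close>

lemma in_span_axes:
  fixes x :: "real ^ 'n"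
  assumes "finite I" "\<And>i. i \<notin> I \<Longrightarrow> x $ i = 0" "\<And>i. i \<in> I \<Longrightarrow> axis i 1 \<in> span S"
  shows "x \<in> span S"
proof -
  have "x = (\<Sum>i\<in>I. x $ i *\<^sub>R axis i 1)"
    using assms(1,2) by (auto simp: vec_eq_iff axis_def if_distrib cong: if_cong)
  also have "\<dots> \<in> span S"
    using assms(3) by (intro span_sum span_scale) auto
  finally show ?thesis .
qed

lemma facet_of_spanning_face:
  fixes P :: "'a::euclidean_space set"
  assumes "convex P" "F face_of P" "F \<noteq> {}" "F \<noteq> P" "0 \<in> P" "P \<subseteq> span F"
  shows "F facet_of P"
proof -
  have "aff_dim P = int (dim P)"
    using assms(5) by (simp add: aff_dim_zero hull_inc)
  also have "dim P \<le> dim F"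
    using dim_subset[OF assms(6)] by (simp only: dim_span)
  also have "int (dim F) = aff_dim (insert 0 F)"
    by (simp add: aff_dim_zero hull_inc dim_insert span_zero)
  also have "aff_dim (insert 0 F) \<le> aff_dim F + 1"
    unfolding aff_dim_insert by simp
  finally have "aff_dim P \<le> aff_dim F + 1" by simp
  moreover have "aff_dim F < aff_dim P"
    using face_of_aff_dim_lt assms(1,2,4) .
  ultimately show ?thesis
    unfolding facet_of_def using assms(2,3) by auto
qed

definition parent_functional :: "'a::finite set \<Rightarrow> 'a \<Rightarrow> real ^ ('a \<times> 'a set)" where
  "parent_functional N a = (\<Sum>B\<in>{B. B \<noteq> {} \<and> B \<subseteq> N - {a}}. axis (a, B) 1)"

lemma inner_parent_functional:
  "parent_functional N a \<bullet> x = (\<Sum>B\<in>{B. B \<noteq> {} \<and> B \<subseteq> N - {a}}. x $ (a, B))"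
  unfolding parent_functional_def by (simp add: inner_sum_left inner_axis')

lemma pa_subset_if_DAG:
  assumes "G \<in> DAG N" "a \<in> N"
  shows "pa G a \<subseteq> N - {a}"
  using assms unfolding DAG_def pa_def acyclic_def by auto

lemma inner_parent_functional_eta:
  fixes N :: "'a::finite set"
  assumes "G \<in> DAG N" "a \<in> N"
  shows "parent_functional N a \<bullet> eta N G = (if pa G a = {} then 0 else 1)"
proof -
  have "parent_functional N a \<bullet> eta N G
      = (\<Sum>B\<in>{B. B \<noteq> {} \<and> B \<subseteq> N - {a}}. if B = pa G a then 1 else 0)"
    unfolding inner_parent_functional eta_def Upsilon_def using assms(2)
    by (intro sum.cong) auto
  then show ?thesis
    using pa_subset_if_DAG[OF assms] by auto
qed

lemma eta_empty: "eta N {} = 0"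
  unfolding eta_def pa_def Upsilon_def by (auto simp: vec_eq_iff)

lemma empty_in_DAG: "{} \<in> DAG N"
  unfolding DAG_def acyclic_def by simp

lemma eta_star:
  fixes N :: "'a::finite set"
  assumes "a \<in> N" "B \<noteq> {}" "B \<subseteq> N - {a}"
  shows "eta N (B \<times> {a}) = axis (a, B) 1"
  using assms unfolding eta_def axis_def Upsilon_def pa_def by (auto simp: vec_eq_iff)

lemma star_in_DAG:
  assumes "a \<in> N" "B \<subseteq> N - {a}"
  shows "B \<times> {a} \<in> DAG N"
proof -
  have "acyclic (B \<times> {a})"
    by (rule acyclicI_order[where f = "\<lambda>x. if x = a then 0 else 1 :: nat"]) (use assms in auto)
  then show ?thesis
    unfolding DAG_def using assms by auto
qed

lemma eta_star_plus_arrow: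
  fixes N :: "'a::finite set"
  assumes "a \<in> N" "c \<in> N" "d \<in> N" "c \<noteq> a" "d \<noteq> a" "d \<noteq> c" "C \<noteq> {}" "C \<subseteq> N - {c}"
  shows "eta N (C \<times> {c} \<union> {(d, a)}) = axis (c, C) 1 + axis (a, {d}) 1"
  using assms unfolding eta_def axis_def Upsilon_def pa_def by (auto simp: vec_eq_iff)

lemma star_plus_arrow_in_DAG:
  assumes "a \<in> N" "c \<in> N" "d \<in> N" "c \<noteq> a" "d \<noteq> a" "d \<noteq> c" "C \<subseteq> N - {c}"
  shows "C \<times> {c} \<union> {(d, a)} \<in> DAG N"
proof -
  have "acyclic (C \<times> {c} \<union> {(d, a)})"
    by (rule acyclicI_order[where f = "\<lambda>x. if x = c then 0 else if x = a then 1 else 2 :: nat"])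
      (use assms in auto)
  then show ?thesis
    unfolding DAG_def using assms by auto
qed

lemma eta_in_family_polytope: "G \<in> DAG N \<Longrightarrow> eta N G \<in> family_polytope N"
  unfolding family_polytope_def by (simp add: hull_inc)

lemma zero_in_family_polytope: "0 \<in> family_polytope N"
  using eta_in_family_polytope[OF empty_in_DAG] by (simp add: eta_empty)

lemma family_polytope_coordinate_zero:
  assumes "x \<in> family_polytope N" "i \<notin> Upsilon N"
  shows "x $ i = 0"
proof -
  have "family_polytope N \<subseteq> {x. x $ i = 0}"
    unfolding family_polytope_def
    by (rule hull_minimal) (auto simp: eta_def assms(2) convex_def)
  then show ?thesis using assms(1) by auto
qed

lemma family_polytope_parent_le:
  fixes N :: "'a::finite set"
  assumes "a \<in> N" "x \<in> family_polytope N"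
  shows "parent_functional N a \<bullet> x \<le> 1"
proof -
  have "family_polytope N \<subseteq> {x. parent_functional N a \<bullet> x \<le> 1}"
    unfolding family_polytope_def
    by (rule hull_minimal) (auto simp: inner_parent_functional_eta assms(1) convex_halfspace_le)
  then show ?thesis using assms(2) by auto
qed

definition parent_face :: "'a::finite set \<Rightarrow> 'a \<Rightarrow> (real ^ ('a \<times> 'a set)) set" where
  "parent_face N a = family_polytope N \<inter> {x. parent_functional N a \<bullet> x = 1}"

lemma eta_in_parent_face:
  fixes N :: "'a::finite set"
  assumes "G \<in> DAG N" "a \<in> N" "pa G a \<noteq> {}"
  shows "eta N G \<in> parent_face N a"
  using assms by (simp add: parent_face_def eta_in_family_polytope inner_parent_functional_eta)

lemma axis_parent_in_parent_face:
  fixes N :: "'a::finite set"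
  assumes "a \<in> N" "B \<noteq> {}" "B \<subseteq> N - {a}"
  shows "axis (a, B) 1 \<in> parent_face N a"
  using eta_in_parent_face[OF star_in_DAG, of a N B] assms
  by (auto simp: eta_star pa_def)

lemma axis_in_span_parent_face:
  fixes N :: "'a::finite set"
  assumes "card N \<ge> 3" "a \<in> N" "i \<in> Upsilon N"
  shows "axis i 1 \<in> span (parent_face N a)"
proof -
  obtain c C where i: "i = (c, C)" and cC: "c \<in> N" "C \<noteq> {}" "C \<subseteq> N - {c}"
    using assms(3) unfolding Upsilon_def by auto
  show ?thesis
  proof (cases "c = a")
    case True
    then have "axis i 1 \<in> parent_face N a"
      using axis_parent_in_parent_face[OF assms(2) cC(2)] cC(3) i by simp
    then show ?thesis by (rule span_base)
  next
    case False
    have "card (N - {a, c}) \<ge> 1"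
      using assms(1,2) cC(1) False by (simp add: card_Diff_subset)
    then have "N - {a, c} \<noteq> {}" by (metis card.empty not_one_le_zero)
    then obtain d where d: "d \<in> N" "d \<noteq> a" "d \<noteq> c" by blast
    let ?G = "C \<times> {c} \<union> {(d, a)}"
    have "?G \<in> DAG N"
      using star_plus_arrow_in_DAG[of a N c d C] assms(2) cC d False by auto
    then have "axis (c, C) 1 + axis (a, {d}) 1 \<in> parent_face N a"
      using eta_in_parent_face[of ?G N a] eta_star_plus_arrow[of a N c d C] assms(2) cC d False
      by (auto simp: pa_def)
    moreover have "axis (a, {d}) 1 \<in> parent_face N a"
      using axis_parent_in_parent_face[OF assms(2), of "{d}"] d by auto
    ultimately have "(axis (c, C) 1 + axis (a, {d}) 1) - axis (a, {d}) 1 \<in> span (parent_face N a)"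
      by (intro span_diff span_base)
    then show ?thesis using i by simp
  qed
qed

lemma family_polytope_subset_span_parent_face:
  fixes N :: "'a::finite set"
  assumes "card N \<ge> 3" "a \<in> N"
  shows "family_polytope N \<subseteq> span (parent_face N a)"
proof
  fix x assume x: "x \<in> family_polytope N"
  show "x \<in> span (parent_face N a)"
  proof (rule in_span_axes[OF finite])
    show "x $ i = 0" if "i \<notin> Upsilon N" for i
      using family_polytope_coordinate_zero[OF x that] .
    show "axis i 1 \<in> span (parent_face N a)" if "i \<in> Upsilon N" for i
      using axis_in_span_parent_face[OF assms that] .
  qed
qed

lemma parent_face_facet_of:
  fixes N :: "'a::finite set"
  assumes "card N \<ge> 3" "a \<in> N"
  shows "parent_face N a facet_of family_polytope N"
proof (rule facet_of_spanning_face)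
  show convex: "convex (family_polytope N)"
    unfolding family_polytope_def by simp
  show "parent_face N a face_of family_polytope N"
    unfolding parent_face_def
    using face_of_Int_supporting_hyperplane_le[OF convex family_polytope_parent_le[OF assms(2)]] .
  have "card (N - {a}) \<ge> 2"
    using assms by (simp add: card_Diff_singleton)
  then obtain d where "d \<in> N - {a}"
    by (metis card.empty ex_in_conv not_numeral_le_zero)
  then show "parent_face N a \<noteq> {}"
    using axis_parent_in_parent_face[OF assms(2), of "{d}"] by auto
  show "0 \<in> family_polytope N"
    by (rule zero_in_family_polytope)
  moreover have "0 \<notin> parent_face N a"
    by (simp add: parent_face_def)
  ultimately show "parent_face N a \<noteq> family_polytope N"
    by blast
  show "family_polytope N \<subseteq> span (parent_face N a)"
    using family_polytope_subset_span_parent_face[OF assms] .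
qed

theorem lemma3:
  fixes N :: "'a::finite set" and a :: 'a
  assumes "card N \<ge> 3" and "a \<in> N"
  shows "(\<forall>x \<in> family_polytope N.
            (\<Sum>B\<in>{B. B \<noteq> {} \<and> B \<subseteq> N - {a}}. x $ (a, B)) \<le> 1)
       \<and> {x \<in> family_polytope N.
            (\<Sum>B\<in>{B. B \<noteq> {} \<and> B \<subseteq> N - {a}}. x $ (a, B)) = 1}
           facet_of family_polytope N"
proof -
  have "parent_face N a = {x \<in> family_polytope N.
      (\<Sum>B\<in>{B. B \<noteq> {} \<and> B \<subseteq> N - {a}}. x $ (a, B)) = 1}"
    unfolding parent_face_def inner_parent_functional by auto
  then show ?thesis
    using parent_face_facet_of[OF assms] family_polytope_parent_le[OF assms(2)]
    unfolding inner_parent_functional by simp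
qed

end
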